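(* For every integer $n>1$ and every admissible total-degree monomial ordering on $R_n$, the set $G_n$ is the reduced Gröbner basis of the ideal $(G_n)$.
   Context: Let $R_n=\mathbb{F}_2[x_1,\ldots,x_n,y_1,\ldots,y_n,z_1,\ldots,z_n]$ with $\mathbb{F}_2=\mathbb{Z}/(2)$. For $S\subseteq R_n$, $(S)$ denotes the ideal generated by $S$. A total-degree ordering is an admissible monomial ordering that first compares total degrees. Define $S_n=\{c^2-c : c\in\{x_1,\ldots,x_n,y_1,\ldots,y_n,z_1,\ldots,z_n\}\}$, $L_n=\{x_iy_i+x_i+y_i-z_i : i=1,\ldots,n\}$, $T_n=\{x_iz_i-x_i : i=1,\ldots,n\}\cup\{y_iz_i-y_i : i=1,\ldots,n\}$, $P_n=\{\prod_{i=1}^n c_i : c_i\in\{x_i,y_i,z_i\}\text{ for each } i\}$, $G_n=S_n\cup L_n\cup T_n\cup P_n$. *)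

theory Defs
  imports "HOL-Library.Poly_Mapping" "HOL-Library.Z2"
begin

datatype var = X nat | Y nat | Z nat

type_synonym mon = "var \<Rightarrow>\<^sub>0 nat"
type_synonym pol = "mon \<Rightarrow>\<^sub>0 bit"

definition vars :: "nat \<Rightarrow> var set" where
  "vars n = {X i | i. 1 \<le> i \<and> i \<le> n} \<union> {Y i | i. 1 \<le> i \<and> i \<le> n} \<union> {Z i | i. 1 \<le> i \<and> i \<le> n}"

definition mons :: "nat \<Rightarrow> mon set" where
  "mons n = {m. Poly_Mapping.keys m \<subseteq> vars n}"

definition R :: "nat \<Rightarrow> pol set" where
  "R n = {p. Poly_Mapping.keys p \<subseteq> mons n}"

definition Var :: "var \<Rightarrow> pol" where
  "Var v = Poly_Mapping.single (Poly_Mapping.single v 1) 1"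

definition tdeg :: "mon \<Rightarrow> nat" where
  "tdeg m = (\<Sum>v\<in>Poly_Mapping.keys m. Poly_Mapping.lookup m v)"

definition mdvd :: "mon \<Rightarrow> mon \<Rightarrow> bool" where
  "mdvd a b \<longleftrightarrow> (\<forall>v. Poly_Mapping.lookup a v \<le> Poly_Mapping.lookup b v)"

definition ideal_gen :: "nat \<Rightarrow> pol set \<Rightarrow> pol set" where
  "ideal_gen n S = {p. \<exists>F q. finite F \<and> F \<subseteq> S \<and> (\<forall>g\<in>F. q g \<in> R n) \<and> p = (\<Sum>g\<in>F. q g * g)}"

section \<open>Monomial orderings (ord a b means a \<preceq> b)\<close>

definition admissible :: "nat \<Rightarrow> (mon \<Rightarrow> mon \<Rightarrow> bool) \<Rightarrow> bool" where
  "admissible n ord \<longleftrightarrow>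
     (\<forall>a\<in>mons n. ord a a) \<and>
     (\<forall>a\<in>mons n. \<forall>b\<in>mons n. ord a b \<and> ord b a \<longrightarrow> a = b) \<and>
     (\<forall>a\<in>mons n. \<forall>b\<in>mons n. \<forall>c\<in>mons n. ord a b \<and> ord b c \<longrightarrow> ord a c) \<and>
     (\<forall>a\<in>mons n. \<forall>b\<in>mons n. ord a b \<or> ord b a) \<and>
     (\<forall>a\<in>mons n. ord 0 a) \<and>
     (\<forall>a\<in>mons n. \<forall>b\<in>mons n. \<forall>c\<in>mons n. ord a b \<longrightarrow> ord (a + c) (b + c))"

definition total_degree :: "nat \<Rightarrow> (mon \<Rightarrow> mon \<Rightarrow> bool) \<Rightarrow> bool" where
  "total_degree n ord \<longleftrightarrow> (\<forall>a\<in>mons n. \<forall>b\<in>mons n. tdeg a < tdeg b \<longrightarrow> ord a b)"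

definition lm :: "(mon \<Rightarrow> mon \<Rightarrow> bool) \<Rightarrow> pol \<Rightarrow> mon" where
  "lm ord p = (THE m. m \<in> Poly_Mapping.keys p \<and> (\<forall>m'\<in>Poly_Mapping.keys p. ord m' m))"

definition lc :: "(mon \<Rightarrow> mon \<Rightarrow> bool) \<Rightarrow> pol \<Rightarrow> bit" where
  "lc ord p = Poly_Mapping.lookup p (lm ord p)"

definition groebner_basis :: "nat \<Rightarrow> (mon \<Rightarrow> mon \<Rightarrow> bool) \<Rightarrow> pol set \<Rightarrow> pol set \<Rightarrow> bool" where
  "groebner_basis n ord G I \<longleftrightarrow>
     finite G \<and> G \<subseteq> I \<and>
     (\<forall>f\<in>I. f \<noteq> 0 \<longrightarrow> (\<exists>g\<in>G. g \<noteq> 0 \<and> mdvd (lm ord g) (lm ord f)))"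

definition reduced_groebner_basis :: "nat \<Rightarrow> (mon \<Rightarrow> mon \<Rightarrow> bool) \<Rightarrow> pol set \<Rightarrow> pol set \<Rightarrow> bool" where
  "reduced_groebner_basis n ord G I \<longleftrightarrow>
     groebner_basis n ord G I \<and>
     (\<forall>g\<in>G. g \<noteq> 0 \<and> lc ord g = 1) \<and>
     (\<forall>g\<in>G. \<forall>g'\<in>G. g' \<noteq> g \<longrightarrow> (\<forall>m\<in>Poly_Mapping.keys g. \<not> mdvd (lm ord g') m))"

definition S_set :: "nat \<Rightarrow> pol set" where
  "S_set n = {Var v ^ 2 - Var v | v. v \<in> vars n}"

definition L_set :: "nat \<Rightarrow> pol set" where
  "L_set n = {Var (X i) * Var (Y i) + Var (X i) + Var (Y i) - Var (Z i) | i. 1 \<le> i \<and> i \<le> n}"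

definition T_set :: "nat \<Rightarrow> pol set" where
  "T_set n = {Var (X i) * Var (Z i) - Var (X i) | i. 1 \<le> i \<and> i \<le> n}
           \<union> {Var (Y i) * Var (Z i) - Var (Y i) | i. 1 \<le> i \<and> i \<le> n}"

definition P_set :: "nat \<Rightarrow> pol set" where
  "P_set n = {(\<Prod>i\<in>{1..n}. Var (c i)) | c. \<forall>i\<in>{1..n}. c i \<in> {X i, Y i, Z i}}"

definition G_set :: "nat \<Rightarrow> pol set" where
  "G_set n = S_set n \<union> L_set n \<union> T_set n \<union> P_set n"

end

theory Submission
  imports Defs "HOL-Library.FuncSet"
begin

text \<open>
  All generators are monic, their leading monomials form an antichain for divisibility, and their
  lower terms are single variables, so \<open>G\<^sub>n\<close> is reduced once it is a Groebner basis.
  For the Groebner property, suppose \<open>f \<in> (G\<^sub>n)\<close> is nonzero and its leading monomial \<open>m\<^sub>0\<close> is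
  divisible by no leading monomial of \<open>G\<^sub>n\<close>. Then \<open>m\<^sub>0\<close> is squarefree, contains at most one
  variable of each row \<open>x\<^sub>i, y\<^sub>i, z\<^sub>i\<close>, and misses some row completely. For such \<open>m\<^sub>0\<close> there is an
  \<open>\<bbbF>\<^sub>2\<close>-linear functional on \<open>R\<^sub>n\<close>, a sum of evaluations at common zeros of \<open>G\<^sub>n\<close>, which
  vanishes on the ideal, takes the value 1 at \<open>m\<^sub>0\<close> and 0 at every other monomial of degree at
  most \<open>deg m\<^sub>0\<close>. As the order refines the degree, it takes the value 1 at \<open>f\<close>: a contradiction.
\<close>

(* Keep 1 :: nat in monomials intact and let simp treat bit as a field, not as xor/and. *)
declare One_nat_def [simp del] add_bit_eq_xor [simp del] mult_bit_eq_and [simp del]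

section \<open>Coefficient functionals\<close>

definition pairing :: "('a \<Rightarrow> 'b) \<Rightarrow> ('a \<Rightarrow>\<^sub>0 'b) \<Rightarrow> 'b::semiring_0" where
  "pairing l p = (\<Sum>m\<in>Poly_Mapping.keys p. Poly_Mapping.lookup p m * l m)"

lemma pairing_superset:
  assumes "finite A" "Poly_Mapping.keys p \<subseteq> A"
  shows "pairing l p = (\<Sum>m\<in>A. Poly_Mapping.lookup p m * l m)"
  unfolding pairing_def using assms by (intro sum.mono_neutral_left) (auto simp: in_keys_iff)

lemma pairing_add: "pairing l (p + q) = pairing l p + pairing l q"
  unfolding pairing_def by (rule setsum_keys_plus_distrib) (simp_all add: distrib_right)

lemma pairing_zero [simp]: "pairing l 0 = 0"
  by (simp add: pairing_def)

lemma pairing_single [simp]: "pairing l (Poly_Mapping.single m c) = c * l m"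
  by (simp add: pairing_def)

lemma pairing_sum: "pairing l (sum f A) = (\<Sum>a\<in>A. pairing l (f a))"
  by (induction A rule: infinite_finite_induct) (simp_all add: pairing_add)

lemma lookup_single_zero_mult:
  "Poly_Mapping.lookup (Poly_Mapping.single 0 c * p) k = c * Poly_Mapping.lookup p k"
  by (simp flip: mult_map_scale_conv_mult add: map.rep_eq when_def)

lemma pairing_scale:
  "pairing l (Poly_Mapping.single 0 c * p) = c * pairing l (p :: 'a::comm_monoid_add \<Rightarrow>\<^sub>0 'b::comm_semiring_1)"
proof -
  have "Poly_Mapping.keys (Poly_Mapping.single 0 c * p) \<subseteq> Poly_Mapping.keys p"
    by (auto simp: in_keys_iff lookup_single_zero_mult)
  then have "pairing l (Poly_Mapping.single 0 c * p) = (\<Sum>m\<in>Poly_Mapping.keys p. c * Poly_Mapping.lookup p m * l m)"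
    by (simp add: pairing_superset[OF finite_keys] lookup_single_zero_mult)
  then show ?thesis
    by (simp add: pairing_def sum_distrib_left mult.assoc)
qed

lemma poly_mapping_sum_single: "p = (\<Sum>m\<in>Poly_Mapping.keys p. Poly_Mapping.single m (Poly_Mapping.lookup p m))"
  by (rule poly_mapping_eqI) (simp add: lookup_sum lookup_single when_def in_keys_iff)

lemma pairing_mult_eq_0:
  fixes g :: "'a::comm_monoid_add \<Rightarrow>\<^sub>0 'b::comm_semiring_1"
  assumes "\<And>m. pairing l (Poly_Mapping.single m 1 * g) = 0"
  shows "pairing l (q * g) = 0"
proof -
  have "q * g = (\<Sum>m\<in>Poly_Mapping.keys q. Poly_Mapping.single 0 (Poly_Mapping.lookup q m) * (Poly_Mapping.single m 1 * g))"
    by (subst poly_mapping_sum_single[of q]) (simp add: sum_distrib_right mult_single flip: mult.assoc)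
  then show ?thesis
    by (simp add: pairing_sum pairing_scale assms)
qed

lemma pairing_ideal_gen_eq_0:
  assumes "\<And>g m. g \<in> G \<Longrightarrow> pairing l (Poly_Mapping.single m 1 * g) = 0"
    and "f \<in> ideal_gen n G"
  shows "pairing l f = 0"
  using assms(2) unfolding ideal_gen_def
  by (auto simp: pairing_sum intro!: sum.neutral pairing_mult_eq_0 assms(1))

abbreviation mvar :: "var \<Rightarrow> mon" where
  "mvar v \<equiv> Poly_Mapping.single v 1"

lemma keys_add_nat: "Poly_Mapping.keys (a + b) = Poly_Mapping.keys a \<union> Poly_Mapping.keys (b :: 'a \<Rightarrow>\<^sub>0 nat)"
  by (auto simp: in_keys_iff lookup_add)

lemma tdeg_add: "tdeg (a + b) = tdeg a + tdeg b"
  unfolding tdeg_def by (rule setsum_keys_plus_distrib) simp_all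

lemma tdeg_zero [simp]: "tdeg 0 = 0"
  by (simp add: tdeg_def)

lemma tdeg_single [simp]: "tdeg (Poly_Mapping.single v k) = k"
  by (simp add: tdeg_def)

lemma tdeg_sum: "tdeg (sum f A) = (\<Sum>a\<in>A. tdeg (f a))"
  by (induction A rule: infinite_finite_induct) (simp_all add: tdeg_add)

lemma tdeg_eq_sum:
  "finite K \<Longrightarrow> Poly_Mapping.keys m \<subseteq> K \<Longrightarrow> tdeg m = (\<Sum>v\<in>K. Poly_Mapping.lookup m v)"
  unfolding tdeg_def by (rule sum.mono_neutral_left) (auto simp: in_keys_iff)

lemma mdvd_imp_tdeg_le:
  assumes "mdvd a b"
  shows "tdeg a \<le> tdeg b"
proof -
  let ?K = "Poly_Mapping.keys a \<union> Poly_Mapping.keys b"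
  have "tdeg a = (\<Sum>v\<in>?K. Poly_Mapping.lookup a v)" by (rule tdeg_eq_sum) auto
  also have "\<dots> \<le> (\<Sum>v\<in>?K. Poly_Mapping.lookup b v)"
    using assms by (intro sum_mono) (simp add: mdvd_def)
  also have "\<dots> = tdeg b" by (rule tdeg_eq_sum[symmetric]) auto
  finally show ?thesis .
qed

lemma mdvd_tdeg_eq_imp_eq:
  assumes "mdvd a b" and "tdeg a = tdeg b"
  shows "a = b"
proof (rule poly_mapping_eqI, rule ccontr)
  fix v assume ne: "Poly_Mapping.lookup a v \<noteq> Poly_Mapping.lookup b v"
  let ?K = "Poly_Mapping.keys a \<union> Poly_Mapping.keys b \<union> {v}"
  have "tdeg a = (\<Sum>v\<in>?K. Poly_Mapping.lookup a v)" by (rule tdeg_eq_sum) auto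
  also have "\<dots> < (\<Sum>v\<in>?K. Poly_Mapping.lookup b v)"
    using assms(1) ne by (intro sum_strict_mono_ex1) (auto simp: mdvd_def le_neq_implies_less)
  also have "\<dots> = tdeg b" by (rule tdeg_eq_sum[symmetric]) auto
  finally show False using assms(2) by simp
qed

lemma mons_add: "a \<in> mons n \<Longrightarrow> b \<in> mons n \<Longrightarrow> a + b \<in> mons n"
  by (simp add: mons_def keys_add_nat)

lemma ideal_gen_subset_R:
  assumes "G \<subseteq> R n"
  shows "ideal_gen n G \<subseteq> R n"
proof
  fix f assume "f \<in> ideal_gen n G"
  then obtain F q where F: "F \<subseteq> G" "\<forall>g\<in>F. q g \<in> R n" and f: "f = (\<Sum>g\<in>F. q g * g)"
    unfolding ideal_gen_def by blast
  have "Poly_Mapping.keys (q g * g) \<subseteq> mons n" if "g \<in> F" for g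
    using keys_mult[of "q g" g] F that assms mons_add unfolding R_def by blast
  then show "f \<in> R n"
    unfolding f R_def using keys_sum[of "\<lambda>g. q g * g" F] by blast
qed

lemma subset_ideal_gen: "G \<subseteq> ideal_gen n G"
proof
  fix g assume "g \<in> G"
  moreover have "(1::pol) \<in> R n"
    by (simp add: R_def mons_def)
  ultimately show "g \<in> ideal_gen n G"
    unfolding ideal_gen_def by (intro CollectI exI[of _ "{g}"] exI[of _ "\<lambda>_. 1"]) auto
qed

text \<open>Over \<open>\<bbbF>\<^sub>2\<close> every element of \<open>G\<^sub>n\<close> is a monic monomial of degree at least 2 plus a sum of
  distinct variables.\<close>

definition lead_plus_vars :: "mon \<Rightarrow> var set \<Rightarrow> pol" where
  "lead_plus_vars a B = Poly_Mapping.single a 1 + (\<Sum>v\<in>B. Var v)"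

lemma keys_lead_plus_vars: "Poly_Mapping.keys (lead_plus_vars a B) \<subseteq> insert a (mvar ` B)"
  using keys_add[of "Poly_Mapping.single a 1" "\<Sum>v\<in>B. Var v"] keys_sum[of Var B]
  unfolding lead_plus_vars_def Var_def by auto

lemma lookup_lead_plus_vars_lead:
  assumes "2 \<le> tdeg a"
  shows "Poly_Mapping.lookup (lead_plus_vars a B) a = 1"
proof -
  have "a \<notin> Poly_Mapping.keys (\<Sum>v\<in>B. Var v)"
    using keys_sum[of Var B] assms unfolding Var_def by auto
  then show ?thesis
    by (simp add: lead_plus_vars_def lookup_add in_keys_iff)
qed

lemma lead_plus_vars_in_R:
  assumes "a \<in> mons n" "B \<subseteq> vars n"
  shows "lead_plus_vars a B \<in> R n"
proof -
  have "mvar ` B \<subseteq> mons n"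
    using assms(2) by (auto simp: mons_def)
  then show ?thesis
    using keys_lead_plus_vars[of a B] assms(1) unfolding R_def by blast
qed

lemma pairing_mult_lead_plus_vars:
  assumes "finite B"
  shows "pairing l (Poly_Mapping.single m 1 * lead_plus_vars a B) = l (m + a) + (\<Sum>v\<in>B. l (m + mvar v))"
proof -
  have "Poly_Mapping.single m 1 * lead_plus_vars a B
      = Poly_Mapping.single (m + a) 1 + (\<Sum>v\<in>B. Poly_Mapping.single (m + mvar v) 1)"
    by (simp add: lead_plus_vars_def Var_def distrib_left sum_distrib_left mult_single)
  then show ?thesis
    by (simp only: pairing_add pairing_sum pairing_single mult_1)
qed

fun row :: "var \<Rightarrow> nat" where
  "row (X i) = i" | "row (Y i) = i" | "row (Z i) = i"

lemma row_eq_iff: "row v = i \<longleftrightarrow> v \<in> {X i, Y i, Z i}"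
  by (cases v) auto

lemma mem_vars_iff: "v \<in> vars n \<longleftrightarrow> row v \<in> {1..n}"
  by (cases v) (auto simp: vars_def)

definition row_choice :: "nat \<Rightarrow> (nat \<Rightarrow> var) \<Rightarrow> bool" where
  "row_choice n c \<longleftrightarrow> (\<forall>i\<in>{1..n}. row (c i) = i)"

definition transversal :: "nat \<Rightarrow> (nat \<Rightarrow> var) \<Rightarrow> mon" where
  "transversal n c = (\<Sum>i\<in>{1..n}. mvar (c i))"

lemma lookup_transversal:
  assumes "row_choice n c"
  shows "Poly_Mapping.lookup (transversal n c) v = (if row v \<in> {1..n} \<and> c (row v) = v then 1 else 0)"
proof -
  have "Poly_Mapping.lookup (transversal n c) v = (\<Sum>i\<in>{1..n}. if i = row v then (if c i = v then 1 else 0) else 0)"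
    unfolding transversal_def lookup_sum
    using assms by (intro sum.cong) (auto simp: lookup_single when_def row_choice_def)
  then show ?thesis
    by simp
qed

lemma tdeg_transversal [simp]: "tdeg (transversal n c) = n"
  by (simp add: transversal_def tdeg_sum)

lemma transversal_in_mons: "row_choice n c \<Longrightarrow> transversal n c \<in> mons n"
  by (auto simp: mons_def mem_vars_iff in_keys_iff lookup_transversal split: if_splits)

definition gen_S :: "var \<Rightarrow> pol" where
  "gen_S v = lead_plus_vars (mvar v + mvar v) {v}"

definition gen_L :: "nat \<Rightarrow> pol" where
  "gen_L i = lead_plus_vars (mvar (X i) + mvar (Y i)) {X i, Y i, Z i}"

definition gen_TX :: "nat \<Rightarrow> pol" where
  "gen_TX i = lead_plus_vars (mvar (X i) + mvar (Z i)) {X i}"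

definition gen_TY :: "nat \<Rightarrow> pol" where
  "gen_TY i = lead_plus_vars (mvar (Y i) + mvar (Z i)) {Y i}"

definition gen_P :: "nat \<Rightarrow> (nat \<Rightarrow> var) \<Rightarrow> pol" where
  "gen_P n c = lead_plus_vars (transversal n c) {}"

lemma poly_mapping_bit_diff_eq_add: "(p :: 'a \<Rightarrow>\<^sub>0 bit) - q = p + q"
  by (rule poly_mapping_eqI) (simp add: lookup_minus lookup_add)

lemma Var_mult: "Var a * Var b = Poly_Mapping.single (mvar a + mvar b) 1"
  by (simp add: Var_def mult_single)

lemma S_set_eq: "S_set n = gen_S ` vars n"
proof -
  have "Var v ^ 2 - Var v = gen_S v" for v
    by (simp add: gen_S_def lead_plus_vars_def power2_eq_square Var_mult poly_mapping_bit_diff_eq_add)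
  then show ?thesis
    unfolding S_set_def by auto
qed

lemma L_set_eq: "L_set n = gen_L ` {1..n}"
proof -
  have "Var (X i) * Var (Y i) + Var (X i) + Var (Y i) - Var (Z i) = gen_L i" for i
    by (simp add: gen_L_def lead_plus_vars_def Var_mult poly_mapping_bit_diff_eq_add ac_simps)
  then show ?thesis
    unfolding L_set_def by auto
qed

lemma T_set_eq: "T_set n = gen_TX ` {1..n} \<union> gen_TY ` {1..n}"
proof -
  have "Var (X i) * Var (Z i) - Var (X i) = gen_TX i" "Var (Y i) * Var (Z i) - Var (Y i) = gen_TY i" for i
    by (simp_all add: gen_TX_def gen_TY_def lead_plus_vars_def Var_mult poly_mapping_bit_diff_eq_add)
  then show ?thesis
    unfolding T_set_def by auto
qed

lemma P_set_eq: "P_set n = gen_P n ` {c. row_choice n c}"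
proof -
  have "(\<Prod>i\<in>{1..n}. Var (c i)) = gen_P n c" for c
    unfolding gen_P_def lead_plus_vars_def transversal_def Var_def
    by (induction n) (simp_all add: mult_single atLeastAtMostSuc_conv add.commute)
  then show ?thesis
    unfolding P_set_def row_choice_def row_eq_iff by auto
qed

lemma gen_P_restrict: "gen_P n (restrict c {1..n}) = gen_P n c"
  unfolding gen_P_def transversal_def by (metis (no_types, lifting) restrict_apply' sum.cong)

lemma finite_vars: "finite (vars n)"
proof (rule finite_subset)
  show "vars n \<subseteq> X ` {1..n} \<union> Y ` {1..n} \<union> Z ` {1..n}"
    unfolding vars_def by auto
qed simp

lemma finite_G_set: "finite (G_set n)"
proof -
  have "P_set n \<subseteq> gen_P n ` (\<Pi>\<^sub>E i\<in>{1..n}. {X i, Y i, Z i})"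
  proof
    fix p assume "p \<in> P_set n"
    then obtain c where c: "row_choice n c" "p = gen_P n c"
      unfolding P_set_eq by blast
    then have "restrict c {1..n} \<in> (\<Pi>\<^sub>E i\<in>{1..n}. {X i, Y i, Z i})"
      by (auto simp: row_choice_def row_eq_iff)
    then show "p \<in> gen_P n ` (\<Pi>\<^sub>E i\<in>{1..n}. {X i, Y i, Z i})"
      using c gen_P_restrict by (metis image_eqI)
  qed
  then have "finite (P_set n)"
    by (rule finite_subset) (intro finite_imageI finite_PiE, auto)
  then show ?thesis
    unfolding G_set_def S_set_eq L_set_eq T_set_eq using finite_vars by blast
qed

lemma mdvd_pair_iff:
  "mdvd (mvar a + mvar b) m \<longleftrightarrow>
     (if a = b then 2 \<le> Poly_Mapping.lookup m a else a \<in> Poly_Mapping.keys m \<and> b \<in> Poly_Mapping.keys m)"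
  unfolding mdvd_def by (auto simp: lookup_add lookup_single when_def in_keys_iff)

lemma pair_eq_iff: "mvar a + mvar b = mvar a' + mvar b' \<longleftrightarrow> (a = a' \<and> b = b') \<or> (a = b' \<and> b = a')"
proof
  assume eq: "mvar a + mvar b = mvar a' + mvar b'"
  have "Poly_Mapping.lookup (mvar a + mvar b) w = Poly_Mapping.lookup (mvar a' + mvar b') w" for w
    using eq by simp
  from this[of a] this[of b] this[of a'] this[of b']
  show "(a = a' \<and> b = b') \<or> (a = b' \<and> b = a')"
    by (auto simp: lookup_add lookup_single when_def split: if_splits)
qed (auto simp: add.commute)

lemma pair_dvd_pair: "mdvd (mvar a + mvar b) (mvar a' + mvar b') \<Longrightarrow> mvar a + mvar b = mvar a' + mvar b'"
  by (rule mdvd_tdeg_eq_imp_eq) (simp_all add: tdeg_add)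

lemma transversal_dvd_iff:
  assumes c: "row_choice n c"
  shows "mdvd (transversal n c) m \<longleftrightarrow> (\<forall>i\<in>{1..n}. c i \<in> Poly_Mapping.keys m)"
proof
  assume d: "mdvd (transversal n c) m"
  show "\<forall>i\<in>{1..n}. c i \<in> Poly_Mapping.keys m"
  proof
    fix i assume "i \<in> {1..n}"
    then have "Poly_Mapping.lookup (transversal n c) (c i) = 1"
      using c by (simp add: lookup_transversal row_choice_def)
    then show "c i \<in> Poly_Mapping.keys m"
      using d unfolding mdvd_def in_keys_iff by (metis not_one_le_zero)
  qed
next
  assume keys: "\<forall>i\<in>{1..n}. c i \<in> Poly_Mapping.keys m"
  show "mdvd (transversal n c) m"
    unfolding mdvd_def
  proof
    fix v
    show "Poly_Mapping.lookup (transversal n c) v \<le> Poly_Mapping.lookup m v"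
      using keys[rule_format, of "row v"] by (auto simp: lookup_transversal[OF c] in_keys_iff)
  qed
qed

lemma pair_not_dvd_transversal:
  assumes "row_choice n c" "row a = row b"
  shows "\<not> mdvd (mvar a + mvar b) (transversal n c)"
proof (cases "a = b")
  case True
  then show ?thesis
    unfolding mdvd_pair_iff by (simp add: lookup_transversal[OF assms(1)])
next
  case False
  then show ?thesis
    using assms unfolding mdvd_pair_iff by (auto simp: in_keys_iff lookup_transversal split: if_splits)
qed

lemma transversal_not_dvd_pair:
  assumes "2 \<le> n" "row_choice n c" "row a = row b"
  shows "\<not> mdvd (transversal n c) (mvar a + mvar b)"
proof
  assume "mdvd (transversal n c) (mvar a + mvar b)"
  then have "c i \<in> {a, b}" if "i \<in> {1..n}" for i
    using that keys_add[of "mvar a" "mvar b"] by (auto simp: transversal_dvd_iff[OF assms(2)])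
  from this[of 1] this[of 2] have "row (c 1) = row a" "row (c 2) = row a"
    using assms(1,3) by auto
  then show False
    using assms(1,2) by (simp add: row_choice_def)
qed

lemma G_set_shape:
  assumes "2 \<le> n"
  shows "G_set n \<subseteq> {lead_plus_vars a B | a B. a \<in> mons n \<and> B \<subseteq> vars n \<and> 2 \<le> tdeg a}"
    (is "_ \<subseteq> ?shape")
proof -
  have "lead_plus_vars (mvar a + mvar b) B \<in> ?shape" if "a \<in> vars n" "b \<in> vars n" "B \<subseteq> vars n" for a b B
    using that by (force simp: mons_def keys_add_nat tdeg_add)
  moreover have "lead_plus_vars (transversal n c) {} \<in> ?shape" if "row_choice n c" for c
    using that assms transversal_in_mons by force
  ultimately show ?thesis
    unfolding G_set_def S_set_eq L_set_eq T_set_eq P_set_eq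
      gen_S_def gen_L_def gen_TX_def gen_TY_def gen_P_def
    by (auto simp: mem_vars_iff)
qed

lemma G_set_subset_R: "2 \<le> n \<Longrightarrow> G_set n \<subseteq> R n"
  using G_set_shape lead_plus_vars_in_R by fastforce

section \<open>A functional separating a standard monomial from the ideal\<close>

definition partial_transversal :: "nat \<Rightarrow> mon \<Rightarrow> bool" where
  "partial_transversal n m \<longleftrightarrow>
     m \<in> mons n \<and> (\<forall>v. Poly_Mapping.lookup m v \<le> 1) \<and> inj_on row (Poly_Mapping.keys m)"

lemma partial_transversalI:
  assumes "m \<in> mons n"
    and "\<And>a b. a \<in> Poly_Mapping.keys m \<Longrightarrow> b \<in> Poly_Mapping.keys m \<Longrightarrow> row a = row b \<Longrightarrow>
      \<not> mdvd (mvar a + mvar b) m"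
  shows "partial_transversal n m"
  unfolding partial_transversal_def
proof (intro conjI assms(1) allI inj_onI)
  fix v
  show "Poly_Mapping.lookup m v \<le> 1"
    using assms(2)[of v v] unfolding mdvd_pair_iff by (simp add: in_keys_iff) arith
next
  fix a b assume "a \<in> Poly_Mapping.keys m" "b \<in> Poly_Mapping.keys m" "row a = row b"
  then show "a = b"
    using assms(2)[of a b] unfolding mdvd_pair_iff by (auto split: if_split_asm)
qed

lemma empty_row_exists:
  assumes "\<And>c. row_choice n c \<Longrightarrow> \<not> mdvd (transversal n c) m"
  shows "\<exists>i\<in>{1..n}. \<forall>v\<in>Poly_Mapping.keys m. row v \<noteq> i"
proof (rule ccontr)
  assume "\<not> ?thesis"
  then have "\<forall>i\<in>{1..n}. \<exists>v\<in>Poly_Mapping.keys m. row v = i"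
    by blast
  then obtain c where c: "\<forall>i\<in>{1..n}. c i \<in> Poly_Mapping.keys m \<and> row (c i) = i"
    by metis
  then have "row_choice n c"
    by (simp add: row_choice_def)
  with c show False
    using assms transversal_dvd_iff by blast
qed

text \<open>
  As a function of the variables of row \<open>i\<close> occurring in \<open>m\<close>, \<open>dual_row m\<^sub>0 m i\<close> is the sum over
  \<open>\<bbbF>\<^sub>2\<close> of the evaluations at some of the points \<open>(0,0,0), (1,0,1), (0,1,1), (1,1,1)\<close> of
  \<open>(x\<^sub>i, y\<^sub>i, z\<^sub>i)\<close>, which are the common zeros of the generators of that row: all four if
  \<open>z\<^sub>i\<close> occurs in \<open>m\<^sub>0\<close>, the last two if \<open>x\<^sub>i\<close> does, the last and \<open>(1,0,1)\<close> if \<open>y\<^sub>i\<close> does,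
  and the origin if row \<open>i\<close> of \<open>m\<^sub>0\<close> is empty. Hence \<open>dual n m\<^sub>0\<close> is a sum of evaluations at
  zeros of the quadratic generators, and also of \<open>P\<^sub>n\<close> when \<open>m\<^sub>0\<close> has an empty row.
\<close>

definition dual_row :: "mon \<Rightarrow> mon \<Rightarrow> nat \<Rightarrow> bool" where
  "dual_row m0 m i =
     (let x = X i \<in> Poly_Mapping.keys m; y = Y i \<in> Poly_Mapping.keys m; z = Z i \<in> Poly_Mapping.keys m in
      if X i \<in> Poly_Mapping.keys m0 then x
      else if Y i \<in> Poly_Mapping.keys m0 then y
      else if Z i \<in> Poly_Mapping.keys m0 then x \<and> y \<or> \<not> x \<and> \<not> y \<and> z
      else \<not> x \<and> \<not> y \<and> \<not> z)"

definition dual :: "nat \<Rightarrow> mon \<Rightarrow> mon \<Rightarrow> bit" where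
  "dual n m0 m = (\<Prod>i\<in>{1..n}. of_bool (dual_row m0 m i))"

lemma dual_self: "dual n m0 m0 = 1"
proof -
  have "dual_row m0 m0 i" for i
    by (auto simp: dual_row_def)
  then show ?thesis
    by (simp add: dual_def)
qed

lemma dual_row_add_other_row:
  assumes "\<forall>v\<in>Poly_Mapping.keys k. row v \<noteq> i"
  shows "dual_row m0 (m + k) i = dual_row m0 m i"
proof -
  have "X i \<notin> Poly_Mapping.keys k" "Y i \<notin> Poly_Mapping.keys k" "Z i \<notin> Poly_Mapping.keys k"
    using assms by force+
  then show ?thesis
    by (simp add: dual_row_def keys_add_nat)
qed

lemma dual_add_row_local:
  assumes "j \<in> {1..n}" "\<forall>v\<in>Poly_Mapping.keys k. row v = j"
  shows "dual n m0 (m + k) = (\<Prod>i\<in>{1..n}-{j}. of_bool (dual_row m0 m i)) * of_bool (dual_row m0 (m + k) j)"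
proof -
  have "dual n m0 (m + k) = of_bool (dual_row m0 (m + k) j) * (\<Prod>i\<in>{1..n}-{j}. of_bool (dual_row m0 (m + k) i))"
    unfolding dual_def using assms(1) by (simp add: prod.remove)
  also have "(\<Prod>i\<in>{1..n}-{j}. of_bool (dual_row m0 (m + k) i)) = (\<Prod>i\<in>{1..n}-{j}. of_bool (dual_row m0 m i))"
    using assms(2) by (intro prod.cong) (auto simp: dual_row_add_other_row)
  finally show ?thesis
    by (simp add: mult.commute)
qed

lemma pairing_dual_row_local:
  assumes j: "j \<in> {1..n}" and rows: "row a = j" "row b = j" "\<forall>v\<in>B. row v = j" and B: "finite B"
    and row_sum: "of_bool (dual_row m0 (m + (mvar a + mvar b)) j)
      + (\<Sum>v\<in>B. of_bool (dual_row m0 (m + mvar v) j)) = (0::bit)"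
  shows "pairing (dual n m0) (Poly_Mapping.single m 1 * lead_plus_vars (mvar a + mvar b) B) = 0"
proof -
  let ?rest = "\<Prod>i\<in>{1..n}-{j}. of_bool (dual_row m0 m i)"
  have "pairing (dual n m0) (Poly_Mapping.single m 1 * lead_plus_vars (mvar a + mvar b) B)
      = ?rest * of_bool (dual_row m0 (m + (mvar a + mvar b)) j)
        + (\<Sum>v\<in>B. ?rest * of_bool (dual_row m0 (m + mvar v) j))"
  proof -
    have "\<forall>v\<in>Poly_Mapping.keys (mvar a + mvar b). row v = j"
      using rows keys_add[of "mvar a" "mvar b"] by auto
    then show ?thesis
      using rows(3) by (simp add: pairing_mult_lead_plus_vars[OF B] dual_add_row_local[OF j])
  qed
  also have "\<dots> = 0"
    using row_sum by (simp flip: distrib_left sum_distrib_left)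
  finally show ?thesis .
qed

lemma pairing_dual_quadratic_gen:
  assumes "g \<in> S_set n \<union> L_set n \<union> T_set n"
  shows "pairing (dual n m0) (Poly_Mapping.single m 1 * g) = 0"
  using assms unfolding S_set_eq L_set_eq T_set_eq
proof (elim UnE imageE)
  fix v assume "v \<in> vars n" and g: "g = gen_S v"
  then show ?thesis
    unfolding g gen_S_def
    by (intro pairing_dual_row_local[where j = "row v"]) (auto simp: mem_vars_iff dual_row_def keys_add_nat)
next
  fix i assume "i \<in> {1..n}" and g: "g = gen_L i"
  then show ?thesis
    unfolding g gen_L_def
    by (intro pairing_dual_row_local[where j = i])
      (auto simp: dual_row_def keys_add_nat of_bool_def simp del: sum_of_bool_eq split: if_splits)
next
  fix i assume "i \<in> {1..n}" and g: "g = gen_TX i"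
  then show ?thesis
    unfolding g gen_TX_def
    by (intro pairing_dual_row_local[where j = i]) (auto simp: dual_row_def keys_add_nat)
next
  fix i assume "i \<in> {1..n}" and g: "g = gen_TY i"
  then show ?thesis
    unfolding g gen_TY_def
    by (intro pairing_dual_row_local[where j = i]) (auto simp: dual_row_def keys_add_nat)
qed

lemma pairing_dual_gen_P:
  assumes c: "row_choice n c" and i0: "i0 \<in> {1..n}" "\<forall>v\<in>Poly_Mapping.keys m0. row v \<noteq> i0"
  shows "pairing (dual n m0) (Poly_Mapping.single m 1 * gen_P n c) = 0"
proof -
  have "c i0 \<in> Poly_Mapping.keys (transversal n c)"
    using c i0(1) by (simp add: in_keys_iff lookup_transversal row_choice_def)
  moreover have "c i0 \<in> {X i0, Y i0, Z i0}"
    using c i0(1) row_eq_iff by (simp add: row_choice_def)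
  moreover have "X i0 \<notin> Poly_Mapping.keys m0" "Y i0 \<notin> Poly_Mapping.keys m0" "Z i0 \<notin> Poly_Mapping.keys m0"
    using i0(2) by force+
  ultimately have "\<not> dual_row m0 (m + transversal n c) i0"
    by (auto simp: dual_row_def keys_add_nat)
  then have "dual n m0 (m + transversal n c) = 0"
    unfolding dual_def using i0(1) by (simp add: prod.remove)
  then show ?thesis
    by (simp add: gen_P_def pairing_mult_lead_plus_vars)
qed

lemma pairing_dual_ideal_gen_eq_0:
  assumes "i0 \<in> {1..n}" "\<forall>v\<in>Poly_Mapping.keys m0. row v \<noteq> i0" "f \<in> ideal_gen n (G_set n)"
  shows "pairing (dual n m0) f = 0"
proof (rule pairing_ideal_gen_eq_0[OF _ assms(3)])
  fix g m assume "g \<in> G_set n"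
  then consider "g \<in> S_set n \<union> L_set n \<union> T_set n" | c where "row_choice n c" "g = gen_P n c"
    unfolding G_set_def P_set_eq by blast
  then show "pairing (dual n m0) (Poly_Mapping.single m 1 * g) = 0"
    using pairing_dual_quadratic_gen pairing_dual_gen_P assms(1,2) by cases auto
qed

definition row_degree :: "mon \<Rightarrow> nat \<Rightarrow> nat" where
  "row_degree m i = Poly_Mapping.lookup m (X i) + Poly_Mapping.lookup m (Y i) + Poly_Mapping.lookup m (Z i)"

lemma tdeg_eq_sum_row_degree:
  assumes "m \<in> mons n"
  shows "tdeg m = (\<Sum>i\<in>{1..n}. row_degree m i)"
proof -
  have "tdeg m = (\<Sum>v\<in>vars n. Poly_Mapping.lookup m v)"
    using assms finite_vars by (intro tdeg_eq_sum) (auto simp: mons_def)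
  also have "vars n = (\<Union>i\<in>{1..n}. {X i, Y i, Z i})"
    unfolding vars_def by auto
  also have "(\<Sum>v\<in>(\<Union>i\<in>{1..n}. {X i, Y i, Z i}). Poly_Mapping.lookup m v)
      = (\<Sum>i\<in>{1..n}. \<Sum>v\<in>{X i, Y i, Z i}. Poly_Mapping.lookup m v)"
    by (rule sum.UNION_disjoint) auto
  finally show ?thesis
    by (simp add: row_degree_def add.assoc)
qed

lemma row_degree_dual_row:
  assumes pt: "partial_transversal n m0" and d: "dual_row m0 m i"
  shows "row_degree m0 i \<le> row_degree m i"
    and "row_degree m0 i = row_degree m i \<Longrightarrow> row v = i \<Longrightarrow> Poly_Mapping.lookup m v = Poly_Mapping.lookup m0 v"
proof -
  have le1: "Poly_Mapping.lookup m0 v \<le> 1" for v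
    using pt by (simp add: partial_transversal_def)
  have excl: "\<not> (a \<in> Poly_Mapping.keys m0 \<and> b \<in> Poly_Mapping.keys m0)" if "a \<noteq> b" "row a = row b" for a b
    using pt that by (auto simp: partial_transversal_def dest: inj_onD)
  note facts = le1[of "X i"] le1[of "Y i"] le1[of "Z i"]
    excl[of "X i" "Y i"] excl[of "X i" "Z i"] excl[of "Y i" "Z i"] d
  show "row_degree m0 i \<le> row_degree m i"
    using facts by (auto simp: row_degree_def dual_row_def in_keys_iff split: if_splits)
  show "Poly_Mapping.lookup m v = Poly_Mapping.lookup m0 v"
    if "row_degree m0 i = row_degree m i" "row v = i"
    using facts that by (auto simp: row_degree_def dual_row_def in_keys_iff row_eq_iff split: if_splits)
qed

lemma dual_triangular:
  assumes pt: "partial_transversal n m0" and m: "m \<in> mons n" and d: "dual n m0 m \<noteq> 0" and ne: "m \<noteq> m0"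
  shows "tdeg m0 < tdeg m"
proof -
  have m0: "m0 \<in> mons n"
    using pt by (simp add: partial_transversal_def)
  have rows: "dual_row m0 m i" if "i \<in> {1..n}" for i
    using d that by (auto simp: dual_def)
  have le: "row_degree m0 i \<le> row_degree m i" if "i \<in> {1..n}" for i
    using row_degree_dual_row(1)[OF pt rows[OF that]] .
  have "\<exists>i\<in>{1..n}. row_degree m0 i < row_degree m i"
  proof (rule ccontr)
    assume "\<not> ?thesis"
    then have eq: "row_degree m0 i = row_degree m i" if "i \<in> {1..n}" for i
      using le[OF that] that by force
    have "m = m0"
    proof (rule poly_mapping_eqI)
      fix v
      show "Poly_Mapping.lookup m v = Poly_Mapping.lookup m0 v"
      proof (cases "row v \<in> {1..n}")
        case True
        then show ?thesis
          using row_degree_dual_row(2)[OF pt rows eq] by blast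
      next
        case False
        then have "v \<notin> Poly_Mapping.keys m" "v \<notin> Poly_Mapping.keys m0"
          using m m0 by (auto simp: mons_def mem_vars_iff)
        then show ?thesis
          by (simp add: in_keys_iff)
      qed
    qed
    then show False
      using ne by simp
  qed
  then show ?thesis
    unfolding tdeg_eq_sum_row_degree[OF m] tdeg_eq_sum_row_degree[OF m0]
    using le by (intro sum_strict_mono_ex1) auto
qed

context
  fixes n :: nat and ord :: "mon \<Rightarrow> mon \<Rightarrow> bool"
  assumes adm: "admissible n ord"
begin

lemma ord_refl: "a \<in> mons n \<Longrightarrow> ord a a"
  using adm unfolding admissible_def by blast

lemma ord_antisym: "a \<in> mons n \<Longrightarrow> b \<in> mons n \<Longrightarrow> ord a b \<Longrightarrow> ord b a \<Longrightarrow> a = b"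
  using adm unfolding admissible_def by blast

lemma ord_trans: "a \<in> mons n \<Longrightarrow> b \<in> mons n \<Longrightarrow> c \<in> mons n \<Longrightarrow> ord a b \<Longrightarrow> ord b c \<Longrightarrow> ord a c"
  using adm unfolding admissible_def by blast

lemma ord_linear: "a \<in> mons n \<Longrightarrow> b \<in> mons n \<Longrightarrow> ord a b \<or> ord b a"
  using adm unfolding admissible_def by blast

lemma lm_eqI:
  assumes "Poly_Mapping.keys p \<subseteq> mons n" "m \<in> Poly_Mapping.keys p" "\<forall>m'\<in>Poly_Mapping.keys p. ord m' m"
  shows "lm ord p = m"
  unfolding lm_def
proof (rule the_equality)
  fix m' assume "m' \<in> Poly_Mapping.keys p \<and> (\<forall>m''\<in>Poly_Mapping.keys p. ord m'' m')"
  then show "m' = m"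
    using assms ord_antisym by blast
qed (use assms in blast)

lemma finite_has_greatest:
  "finite K \<Longrightarrow> K \<noteq> {} \<Longrightarrow> K \<subseteq> mons n \<Longrightarrow> \<exists>m\<in>K. \<forall>m'\<in>K. ord m' m"
proof (induction K rule: finite_ne_induct)
  case (singleton x)
  then show ?case using ord_refl by auto
next
  case (insert x F)
  then obtain m where m: "m \<in> F" "\<forall>m'\<in>F. ord m' m" by auto
  show ?case
  proof (cases "ord x m")
    case True
    then show ?thesis using m by auto
  next
    case False
    then have "ord m x"
      using ord_linear insert.prems m(1) by blast
    then have "\<forall>m'\<in>insert x F. ord m' x"
      using ord_refl ord_trans[of _ m x] insert.prems m by blast
    then show ?thesis by blast
  qed
qed

lemma lm_greatest:
  assumes "Poly_Mapping.keys p \<subseteq> mons n" "p \<noteq> 0"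
  shows "lm ord p \<in> Poly_Mapping.keys p" "\<forall>m\<in>Poly_Mapping.keys p. ord m (lm ord p)"
proof -
  obtain m where "m \<in> Poly_Mapping.keys p" "\<forall>m'\<in>Poly_Mapping.keys p. ord m' m"
    using finite_has_greatest[of "Poly_Mapping.keys p"] assms by auto
  with lm_eqI assms show "lm ord p \<in> Poly_Mapping.keys p" "\<forall>m\<in>Poly_Mapping.keys p. ord m (lm ord p)"
    by auto
qed

lemma lm_eq_top_degree:
  assumes td: "total_degree n ord" and keys: "Poly_Mapping.keys p \<subseteq> mons n" and a: "a \<in> Poly_Mapping.keys p"
    and top: "\<And>m. m \<in> Poly_Mapping.keys p \<Longrightarrow> m \<noteq> a \<Longrightarrow> tdeg m < tdeg a"
  shows "lm ord p = a"
proof (rule lm_eqI[OF keys a], intro ballI)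
  fix m assume "m \<in> Poly_Mapping.keys p"
  then show "ord m a"
    using ord_refl td keys a top unfolding total_degree_def by (cases "m = a") blast+
qed

lemma lm_lead_plus_vars:
  assumes "total_degree n ord" "a \<in> mons n" "B \<subseteq> vars n" "2 \<le> tdeg a"
  shows "lm ord (lead_plus_vars a B) = a"
proof (rule lm_eq_top_degree[OF assms(1)])
  show "Poly_Mapping.keys (lead_plus_vars a B) \<subseteq> mons n"
    using lead_plus_vars_in_R[OF assms(2,3)] by (simp add: R_def)
  show "a \<in> Poly_Mapping.keys (lead_plus_vars a B)"
    using lookup_lead_plus_vars_lead[OF assms(4)] by (simp add: in_keys_iff)
  show "tdeg m < tdeg a" if "m \<in> Poly_Mapping.keys (lead_plus_vars a B)" "m \<noteq> a" for m
    using that keys_lead_plus_vars[of a B] assms(4) by auto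
qed

end

context
  fixes n :: nat and ord :: "mon \<Rightarrow> mon \<Rightarrow> bool"
  assumes adm: "admissible n ord" and td: "total_degree n ord" and n2: "2 \<le> n"
begin

lemma lm_G_set:
  assumes "g \<in> G_set n"
  shows "Poly_Mapping.lookup g (lm ord g) = 1" "2 \<le> tdeg (lm ord g)"
    "\<And>m. m \<in> Poly_Mapping.keys g \<Longrightarrow> m \<noteq> lm ord g \<Longrightarrow> tdeg m = 1"
proof -
  obtain a B where g: "g = lead_plus_vars a B" and a: "a \<in> mons n" "2 \<le> tdeg a" and B: "B \<subseteq> vars n"
    using G_set_shape[OF n2] assms by blast
  have lm: "lm ord g = a"
    unfolding g using lm_lead_plus_vars[OF adm td a(1) B a(2)] .
  show "Poly_Mapping.lookup g (lm ord g) = 1" "2 \<le> tdeg (lm ord g)"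
    unfolding lm using lookup_lead_plus_vars_lead[OF a(2)] a(2) g by simp_all
  show "tdeg m = 1" if "m \<in> Poly_Mapping.keys g" "m \<noteq> lm ord g" for m
    using that keys_lead_plus_vars[of a B] unfolding lm unfolding g by auto
qed

lemma lm_gen:
  shows "v \<in> vars n \<Longrightarrow> lm ord (gen_S v) = mvar v + mvar v"
    and "i \<in> {1..n} \<Longrightarrow> lm ord (gen_L i) = mvar (X i) + mvar (Y i)"
    and "i \<in> {1..n} \<Longrightarrow> lm ord (gen_TX i) = mvar (X i) + mvar (Z i)"
    and "i \<in> {1..n} \<Longrightarrow> lm ord (gen_TY i) = mvar (Y i) + mvar (Z i)"
  unfolding gen_S_def gen_L_def gen_TX_def gen_TY_def
  by (auto intro!: lm_lead_plus_vars[OF adm td] simp: mons_def keys_add_nat mem_vars_iff tdeg_add)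

lemma lm_gen_P: "row_choice n c \<Longrightarrow> lm ord (gen_P n c) = transversal n c"
  unfolding gen_P_def using n2 by (auto intro!: lm_lead_plus_vars[OF adm td] transversal_in_mons)

lemma lm_quadratic_gen:
  assumes "g \<in> S_set n \<union> L_set n \<union> T_set n"
  shows "\<exists>a b. row a = row b \<and> lm ord g = mvar a + mvar b"
  using assms unfolding S_set_eq L_set_eq T_set_eq
  by (elim UnE imageE) (simp add: lm_gen; metis row.simps)+

lemma lm_quadratic_gen_inj:
  assumes "g \<in> S_set n \<union> L_set n \<union> T_set n" "g' \<in> S_set n \<union> L_set n \<union> T_set n"
    and "lm ord g = lm ord g'"
  shows "g = g'"
  using assms unfolding S_set_eq L_set_eq T_set_eq
  by (elim UnE imageE; simp add: lm_gen pair_eq_iff; elim disjE conjE; simp)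

lemma lm_G_set_antichain:
  assumes g: "g \<in> G_set n" and g': "g' \<in> G_set n" and dvd: "mdvd (lm ord g') (lm ord g)"
  shows "g' = g"
proof -
  let ?Q = "S_set n \<union> L_set n \<union> T_set n"
  have gen_P_cases: "\<exists>c. row_choice n c \<and> h = gen_P n c" if "h \<in> G_set n" "h \<notin> ?Q" for h
    using that unfolding G_set_def P_set_eq by blast
  show ?thesis
  proof (cases "g \<in> ?Q")
    case gQ: True
    then obtain a b where lm_g: "row a = row b" "lm ord g = mvar a + mvar b"
      using lm_quadratic_gen by blast
    show ?thesis
    proof (cases "g' \<in> ?Q")
      case True
      then obtain a' b' where "lm ord g' = mvar a' + mvar b'"
        using lm_quadratic_gen by blast
      then have "lm ord g' = lm ord g"
        using dvd lm_g pair_dvd_pair by simp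
      then show ?thesis
        using gQ True lm_quadratic_gen_inj by blast
    next
      case False
      then obtain c' where "row_choice n c'" "g' = gen_P n c'"
        using gen_P_cases g' by blast
      then show ?thesis
        using dvd lm_g transversal_not_dvd_pair[OF n2] by (simp add: lm_gen_P)
    qed
  next
    case False
    then obtain c where c: "row_choice n c" "g = gen_P n c"
      using gen_P_cases g by blast
    show ?thesis
    proof (cases "g' \<in> ?Q")
      case True
      then obtain a' b' where "row a' = row b'" "lm ord g' = mvar a' + mvar b'"
        using lm_quadratic_gen by blast
      then show ?thesis
        using dvd c pair_not_dvd_transversal by (simp add: lm_gen_P)
    next
      case False
      then obtain c' where c': "row_choice n c'" "g' = gen_P n c'"
        using gen_P_cases g' by blast
      then have "transversal n c' = transversal n c"
        using dvd c mdvd_tdeg_eq_imp_eq by (simp add: lm_gen_P)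
      then show ?thesis
        using c c' by (simp add: gen_P_def)
    qed
  qed
qed

lemma pair_in_lm_G_set:
  assumes "a \<in> vars n" "b \<in> vars n" "row a = row b"
  shows "mvar a + mvar b \<in> lm ord ` G_set n"
proof -
  have S: "mvar v + mvar v \<in> lm ord ` G_set n" if "v \<in> vars n" for v
    by (rule image_eqI[where f = "lm ord" and x = "gen_S v", OF lm_gen(1)[OF that, symmetric]])
      (use that in \<open>simp add: G_set_def S_set_eq\<close>)
  have L: "mvar (X i) + mvar (Y i) \<in> lm ord ` G_set n" if "i \<in> {1..n}" for i
    by (rule image_eqI[where f = "lm ord" and x = "gen_L i", OF lm_gen(2)[OF that, symmetric]])
      (use that in \<open>simp add: G_set_def L_set_eq\<close>)
  have TX: "mvar (X i) + mvar (Z i) \<in> lm ord ` G_set n" if "i \<in> {1..n}" for i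
    by (rule image_eqI[where f = "lm ord" and x = "gen_TX i", OF lm_gen(3)[OF that, symmetric]])
      (use that in \<open>simp add: G_set_def T_set_eq\<close>)
  have TY: "mvar (Y i) + mvar (Z i) \<in> lm ord ` G_set n" if "i \<in> {1..n}" for i
    by (rule image_eqI[where f = "lm ord" and x = "gen_TY i", OF lm_gen(4)[OF that, symmetric]])
      (use that in \<open>simp add: G_set_def T_set_eq\<close>)
  show ?thesis
  proof (cases "a = b")
    case True
    then show ?thesis
      using S assms(1) by simp
  next
    case False
    have "row a \<in> {1..n}"
      using assms(1) by (simp add: mem_vars_iff)
    note facts = L[OF this] TX[OF this] TY[OF this]
    show ?thesis
      using False assms(3) facts by (cases a; cases b) (auto simp: ac_simps)
  qed
qed

lemma lm_G_set_reduced: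
  assumes g: "g \<in> G_set n" and g': "g' \<in> G_set n" "g' \<noteq> g" and m: "m \<in> Poly_Mapping.keys g"
  shows "\<not> mdvd (lm ord g') m"
proof
  assume dvd: "mdvd (lm ord g') m"
  show False
  proof (cases "m = lm ord g")
    case True
    then show False
      using lm_G_set_antichain g g' dvd by blast
  next
    case False
    then have "tdeg m = 1"
      using lm_G_set(3)[OF g m] by blast
    moreover have "2 \<le> tdeg (lm ord g')"
      using lm_G_set(2)[OF g'(1)] .
    ultimately show False
      using mdvd_imp_tdeg_le[OF dvd] by simp
  qed
qed

lemma pairing_dual_lm:
  assumes keys: "Poly_Mapping.keys f \<subseteq> mons n" and f0: "f \<noteq> 0" and pt: "partial_transversal n (lm ord f)"
  shows "pairing (dual n (lm ord f)) f = 1"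
proof -
  let ?m0 = "lm ord f"
  have m0: "?m0 \<in> Poly_Mapping.keys f" "\<forall>m\<in>Poly_Mapping.keys f. ord m ?m0"
    using lm_greatest[OF adm keys f0] by blast+
  have "dual n ?m0 m = 0" if m: "m \<in> Poly_Mapping.keys f - {?m0}" for m
  proof (rule ccontr)
    assume "dual n ?m0 m \<noteq> 0"
    then have "tdeg ?m0 < tdeg m"
      using dual_triangular pt keys m by blast
    then have "ord ?m0 m"
      using td keys m0(1) m unfolding total_degree_def by blast
    then show False
      using ord_antisym[OF adm] m0 m keys by blast
  qed
  then have "pairing (dual n ?m0) f = Poly_Mapping.lookup f ?m0 * dual n ?m0 ?m0"
    unfolding pairing_def by (simp add: sum.remove[OF finite_keys m0(1)])
  also have "\<dots> = 1"
    using m0(1) by (simp add: dual_self in_keys_iff)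
  finally show ?thesis .
qed

lemma lm_ideal_gen_G_set_dvd:
  assumes f: "f \<in> ideal_gen n (G_set n)" and f0: "f \<noteq> 0"
  shows "\<exists>g\<in>G_set n. mdvd (lm ord g) (lm ord f)"
proof (rule ccontr)
  assume not_dvd: "\<not> ?thesis"
  let ?m0 = "lm ord f"
  have keys: "Poly_Mapping.keys f \<subseteq> mons n"
    using ideal_gen_subset_R[OF G_set_subset_R[OF n2]] f by (auto simp: R_def)
  then have "?m0 \<in> mons n"
    using lm_greatest(1)[OF adm keys f0] by blast
  then have "partial_transversal n ?m0"
  proof (rule partial_transversalI)
    fix a b assume "a \<in> Poly_Mapping.keys ?m0" "b \<in> Poly_Mapping.keys ?m0" "row a = row b"
    then have "mvar a + mvar b \<in> lm ord ` G_set n"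
      using \<open>?m0 \<in> mons n\<close> by (intro pair_in_lm_G_set) (auto simp: mons_def)
    then show "\<not> mdvd (mvar a + mvar b) ?m0"
      using not_dvd by force
  qed
  moreover have "\<not> mdvd (transversal n c) ?m0" if "row_choice n c" for c
  proof -
    have "gen_P n c \<in> G_set n"
      using that by (simp add: G_set_def P_set_eq)
    then show ?thesis
      using not_dvd lm_gen_P[OF that] by auto
  qed
  then obtain i0 where "i0 \<in> {1..n}" "\<forall>v\<in>Poly_Mapping.keys ?m0. row v \<noteq> i0"
    using empty_row_exists by blast
  ultimately show False
    using pairing_dual_lm[OF keys f0] pairing_dual_ideal_gen_eq_0[OF _ _ f] by simp
qed

end

theorem lemma2:
  fixes n :: nat and ord :: "mon \<Rightarrow> mon \<Rightarrow> bool"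
  assumes "n > 1"
    and "admissible n ord"
    and "total_degree n ord"
  shows "reduced_groebner_basis n ord (G_set n) (ideal_gen n (G_set n))"
proof -
  have n2: "2 \<le> n"
    using assms(1) by simp
  have monic: "\<forall>g\<in>G_set n. g \<noteq> 0 \<and> lc ord g = 1"
  proof
    fix g assume "g \<in> G_set n"
    then have "Poly_Mapping.lookup g (lm ord g) = 1"
      by (rule lm_G_set(1)[OF assms(2,3) n2])
    then show "g \<noteq> 0 \<and> lc ord g = 1"
      by (auto simp: lc_def)
  qed
  then have dvd: "\<forall>f\<in>ideal_gen n (G_set n). f \<noteq> 0 \<longrightarrow> (\<exists>g\<in>G_set n. g \<noteq> 0 \<and> mdvd (lm ord g) (lm ord f))"
    using lm_ideal_gen_G_set_dvd[OF assms(2,3) n2] by blast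
  have reduced: "\<forall>g\<in>G_set n. \<forall>g'\<in>G_set n. g' \<noteq> g \<longrightarrow> (\<forall>m\<in>Poly_Mapping.keys g. \<not> mdvd (lm ord g') m)"
    using lm_G_set_reduced[OF assms(2,3) n2] by blast
  show ?thesis
    unfolding reduced_groebner_basis_def groebner_basis_def
    using finite_G_set subset_ideal_gen monic dvd reduced by (intro conjI)
qed

end
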